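(* In the setting below, let $(u^h)_{h>0}$ be a uniformly bounded family of real-valued maps on $[0,T]\times\mathbb R$ with half-relaxed limits $\overline u,\underline u$, and let $u^{n,h}=(u^h(\tau^n,x_0),\dots,u^h(\tau^n,x_M))^\top$ (grid depending on $h$). Then for every $(t,x)\in[0,T]\times\mathbb R$, $\mathcal M\underline u(t,x)\le\liminf(\mathcal M_nu^{n,h})_i\le\limsup(\mathcal M_nu^{n,h})_i\le\mathcal M\overline u(t,x)$, where $\liminf$ and $\limsup$ are taken as $h\to0$ and $(\tau^n,x_i)\to(t,x)$ over grid points of the $h$-grid.
   Context: Fix $T>0$, a metric space $Y$, nonempty compact sets $Z(t,x)\subseteq Y$ for $(t,x)\in[0,T]\times\mathbb R$, and continuous $\Gamma(t,x,z)\in\mathbb R$, $K(t,x,z)\in\mathbb R$. Intervention operator: $\mathcal MV(t,x)=\sup_{z\in Z(t,x)}\{V(t,\Gamma(t,x,z))+K(t,x,z)\}$. For each $h>0$: a time step $\Delta\tau=T/N$ and space step $\Delta x$ with $\Delta\tau,\Delta x\le Ch$ ($C$ independent of $h$), $M$ even with $M\Delta x\to\infty$ as $h\to0$, $\tau^n=T-n\Delta\tau$ ($0\le n\le N$), $x_i=(i-M/2)\Delta x$ ($0\le i\le M$); finite nonempty sets $Z^h(t,x)\subseteq Z(t,x)$ with $Z^h\to Z$ locally uniformly in the Hausdorff metric as $h\to0$ and $(t,x)\mapsto Z^h(t,x)$ Hausdorff-continuous. Linear interpolation of $U\in\mathbb R^{M+1}$: $\operatorname{interp}(U,y)=\alpha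 U_{k+1}+(1-\alpha)U_k$ if $x_k\le y<x_{k+1}$, $\alpha=(y-x_k)/(x_{k+1}-x_k)$; $U_0$ if $y\le x_0$; $U_M$ if $y\ge x_M$. Discretized intervention operator: $(\mathcal M_nU)_i=\sup_{z\in Z^h(\tau^n,x_i)}\{\operatorname{interp}(U,\Gamma(\tau^n,x_i,z))+K(\tau^n,x_i,z)\}$. Half-relaxed limits: $\overline u(t,x)=\limsup_{h\to0,(s,y)\to(t,x)}u^h(s,y)$, $\underline u(t,x)=\liminf_{h\to0,(s,y)\to(t,x)}u^h(s,y)$. *)

theory Defs
  imports "HOL-Analysis.Analysis" "HOL-Library.Extended_Real"
begin

definition hausdist :: "'a::metric_space set \<Rightarrow> 'a set \<Rightarrow> real" where
  "hausdist A B = max (SUP a\<in>A. infdist a B) (SUP b\<in>B. infdist b A)"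

definition interp :: "(nat \<Rightarrow> real) \<Rightarrow> nat \<Rightarrow> (nat \<Rightarrow> real) \<Rightarrow> real \<Rightarrow> real" where
  "interp xs M U y =
     (if y \<le> xs 0 then U 0
      else if y \<ge> xs M then U M
      else (let k = (THE k. k < M \<and> xs k \<le> y \<and> y < xs (Suc k));
                \<alpha> = (y - xs k) / (xs (Suc k) - xs k)
            in \<alpha> * U (Suc k) + (1 - \<alpha>) * U k))"

definition tgrid :: "real \<Rightarrow> nat \<Rightarrow> nat \<Rightarrow> real" where
  "tgrid T N n = T - real n * (T / real N)"

definition xgrid :: "nat \<Rightarrow> real \<Rightarrow> nat \<Rightarrow> real" where
  "xgrid M dx i = (real i - real M / 2) * dx"

definition interv ::
  "(real \<Rightarrow> real \<Rightarrow> 'y set) \<Rightarrow> (real \<Rightarrow> real \<Rightarrow> 'y \<Rightarrow> real) \<Rightarrow> (real \<Rightarrow> real \<Rightarrow> 'y \<Rightarrow> real)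
     \<Rightarrow> (real \<Rightarrow> real \<Rightarrow> ereal) \<Rightarrow> real \<Rightarrow> real \<Rightarrow> ereal" where
  "interv Z \<Gamma> K V t x = (SUP z\<in>Z t x. V t (\<Gamma> t x z) + ereal (K t x z))"

definition interv_disc ::
  "(real \<Rightarrow> real \<Rightarrow> 'y set) \<Rightarrow> (real \<Rightarrow> real \<Rightarrow> 'y \<Rightarrow> real) \<Rightarrow> (real \<Rightarrow> real \<Rightarrow> 'y \<Rightarrow> real)
     \<Rightarrow> real \<Rightarrow> nat \<Rightarrow> nat \<Rightarrow> real \<Rightarrow> nat \<Rightarrow> (nat \<Rightarrow> real) \<Rightarrow> nat \<Rightarrow> real" where
  "interv_disc Zh \<Gamma> K T N M dx n U i =
     (let t = tgrid T N n; x = xgrid M dx i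
      in Sup ((\<lambda>z. interp (xgrid M dx) M U (\<Gamma> t x z) + K t x z) ` Zh t x))"

definition hr_filter :: "real \<Rightarrow> real \<Rightarrow> real \<Rightarrow> (real \<times> (real \<times> real)) filter" where
  "hr_filter T t x = at_right 0 \<times>\<^sub>F (inf (nhds (t, x)) (principal ({0..T} \<times> UNIV)))"

definition upper_hr :: "real \<Rightarrow> (real \<Rightarrow> real \<Rightarrow> real \<Rightarrow> real) \<Rightarrow> real \<Rightarrow> real \<Rightarrow> ereal" where
  "upper_hr T u t x = Limsup (hr_filter T t x) (\<lambda>(h, s, y). ereal (u h s y))"

definition lower_hr :: "real \<Rightarrow> (real \<Rightarrow> real \<Rightarrow> real \<Rightarrow> real) \<Rightarrow> real \<Rightarrow> real \<Rightarrow> ereal" where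
  "lower_hr T u t x = Liminf (hr_filter T t x) (\<lambda>(h, s, y). ereal (u h s y))"

definition grid_filter :: "real \<Rightarrow> (real \<Rightarrow> nat) \<Rightarrow> (real \<Rightarrow> nat) \<Rightarrow> (real \<Rightarrow> real)
     \<Rightarrow> real \<Rightarrow> real \<Rightarrow> (real \<times> nat \<times> nat) filter" where
  "grid_filter T N M dx t x =
     inf (filtercomap (\<lambda>(h, n, i). (h, (tgrid T (N h) n, xgrid (M h) (dx h) i)))
            (at_right 0 \<times>\<^sub>F nhds (t, x)))
         (principal {(h, n, i). 0 < h \<and> n \<le> N h \<and> i \<le> M h})"

end

theory Submission
  imports Defs
begin

text \<open>For the upper bound take c above the intervention operator of the upper limit at (t, x).
  For each z \<in> Z t x the upper limit at the jump target \<Gamma> t x z is below c - K t x z, so u^h is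
  eventually below it near that target. For grid points near (t, x) and controls z' near z the
  jump target \<Gamma>(\<tau>^n, x_i, z') stays close to \<Gamma> t x z and the interpolant there is dominated by
  a nearby grid value, so the discrete payoff is below c. Compactness of Z t x makes this uniform
  on a neighbourhood of Z t x, and this neighbourhood eventually contains the discrete control
  sets because Z is Hausdorff continuous and Zh \<rightarrow> Z. The lower bound is symmetric: one
  near-optimal z \<in> Z t x is approximated by discrete controls z'.\<close>

lemma hausdist_lessD1:
  fixes A B :: "'a::metric_space set"
  assumes "a \<in> A" "B \<noteq> {}" "bounded A" "hausdist A B < e"
  shows "\<exists>b\<in>B. dist a b < e"
proof -
  obtain b0 where b0: "b0 \<in> B" using assms(2) by auto
  obtain c r where cr: "\<forall>y\<in>A. dist c y \<le> r" using assms(3) unfolding bounded_def by auto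
  have "bdd_above ((\<lambda>a. infdist a B) ` A)"
  proof (rule bdd_aboveI2)
    fix a' assume "a' \<in> A"
    have "infdist a' B \<le> dist a' b0" using b0 by (rule infdist_le)
    also have "\<dots> \<le> dist c a' + dist c b0" by (metis dist_commute dist_triangle)
    also have "\<dots> \<le> r + dist c b0" using cr \<open>a' \<in> A\<close> by auto
    finally show "infdist a' B \<le> r + dist c b0" .
  qed
  then have "infdist a B \<le> (SUP a\<in>A. infdist a B)" using assms(1) by (rule cSUP_upper2) simp
  also have "\<dots> \<le> hausdist A B" unfolding hausdist_def by simp
  finally have "(INF b\<in>B. dist a b) < e" using assms(2,4) by (simp add: infdist_notempty)
  then show ?thesis using assms(2) by (subst (asm) cINF_less_iff) (auto intro: bdd_belowI2[where m=0])
qed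

lemma hausdist_lessD2:
  fixes A B :: "'a::metric_space set"
  assumes "b \<in> B" "A \<noteq> {}" "bounded B" "hausdist A B < e"
  shows "\<exists>a\<in>A. dist b a < e"
  using hausdist_lessD1[OF assms(1-3)] assms(4) by (simp add: hausdist_def max.commute)

lemma dist_Pair_le_add: "dist (a, b) (c, d) \<le> dist a c + dist b d"
  by (simp add: dist_Pair_Pair sqrt_sum_squares_le_sum)

lemma xgrid_Suc: "xgrid M dx (Suc k) = xgrid M dx k + dx"
  unfolding xgrid_def by (simp add: algebra_simps)

lemma xgrid_mono: "0 \<le> dx \<Longrightarrow> i \<le> j \<Longrightarrow> xgrid M dx i \<le> xgrid M dx j"
  unfolding xgrid_def by (simp add: mult_right_mono)

lemma xgrid_cell_exists:
  assumes "0 < dx" "\<bar>y\<bar> < real M * dx / 2"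
  shows "\<exists>k<M. xgrid M dx k \<le> y \<and> y < xgrid M dx (Suc k)"
proof -
  define r where "r = y / dx + real M / 2"
  have "0 < r" "r < real M"
    using assms by (auto simp: r_def field_simps abs_less_iff)
  moreover define k where "k = nat \<lfloor>r\<rfloor>"
  ultimately have k: "real k \<le> r" "r < real k + 1" "k < M"
    by (auto simp: k_def) linarith
  have "real k - real M / 2 \<le> y / dx" "y / dx < real (Suc k) - real M / 2"
    using k by (auto simp: r_def)
  then show ?thesis
    using assms(1) k(3) unfolding xgrid_def by (intro exI[of _ k]) (simp add: field_simps)
qed

lemma interp_xgrid_cell:
  assumes dx: "0 < dx" and y: "\<bar>y\<bar> < real M * dx / 2"
  obtains k a where "k < M" "\<bar>xgrid M dx k - y\<bar> \<le> dx" "\<bar>xgrid M dx (Suc k) - y\<bar> \<le> dx"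
    "0 \<le> a" "a \<le> 1" "interp (xgrid M dx) M U y = a * U (Suc k) + (1 - a) * U k"
proof -
  obtain k where k: "k < M" "xgrid M dx k \<le> y" "y < xgrid M dx (Suc k)"
    using xgrid_cell_exists[OF assms] by blast
  have cell_unique: "k' = k" if "xgrid M dx k' \<le> y" "y < xgrid M dx (Suc k')" for k'
    using xgrid_mono[of dx "Suc k'" k M] xgrid_mono[of dx "Suc k" k' M] dx that k
    by (cases "k' < k"; cases "k < k'") auto
  have "(THE k. k < M \<and> xgrid M dx k \<le> y \<and> y < xgrid M dx (Suc k)) = k"
    using k cell_unique by blast
  moreover have "xgrid M dx 0 < y" "y < xgrid M dx M"
    using y dx by (auto simp: xgrid_def abs_less_iff)
  moreover define a where "a = (y - xgrid M dx k) / (xgrid M dx (Suc k) - xgrid M dx k)"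
  ultimately have "interp (xgrid M dx) M U y = a * U (Suc k) + (1 - a) * U k"
    by (simp add: interp_def Let_def)
  moreover have "0 \<le> a" "a \<le> 1"
    using k dx by (auto simp: a_def xgrid_Suc field_simps)
  ultimately show thesis
    using that k by (auto simp: xgrid_Suc)
qed

lemma interp_xgrid_bracket:
  assumes "0 < dx" "\<bar>y\<bar> < real M * dx / 2"
  shows "\<exists>j\<le>M. \<bar>xgrid M dx j - y\<bar> \<le> dx \<and> interp (xgrid M dx) M U y \<le> U j"
    and "\<exists>j\<le>M. \<bar>xgrid M dx j - y\<bar> \<le> dx \<and> U j \<le> interp (xgrid M dx) M U y"
proof -
  obtain k a where k: "k < M" "\<bar>xgrid M dx k - y\<bar> \<le> dx" "\<bar>xgrid M dx (Suc k) - y\<bar> \<le> dx"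
    and a: "0 \<le> a" "a \<le> 1" and iv: "interp (xgrid M dx) M U y = a * U (Suc k) + (1 - a) * U k"
    using interp_xgrid_cell[OF assms] .
  have "a * U (Suc k) + (1 - a) * U k \<le> max (U k) (U (Suc k))"
    using a by (intro convex_bound_le) auto
  moreover have "min (U k) (U (Suc k)) \<le> a * U (Suc k) + (1 - a) * U k"
    using convex_bound_le[of "- U (Suc k)" "- min (U k) (U (Suc k))" "- U k" a "1 - a"] a by simp
  ultimately show "\<exists>j\<le>M. \<bar>xgrid M dx j - y\<bar> \<le> dx \<and> interp (xgrid M dx) M U y \<le> U j"
    and "\<exists>j\<le>M. \<bar>xgrid M dx j - y\<bar> \<le> dx \<and> U j \<le> interp (xgrid M dx) M U y"
    using k iv by (metis Suc_leI less_imp_le_nat max_def min_def)+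
qed

lemma tgrid_in_range: "0 < T \<Longrightarrow> 0 < N \<Longrightarrow> n \<le> N \<Longrightarrow> tgrid T N n \<in> {0..T}"
  unfolding tgrid_def by (auto simp: field_simps)

lemma tgrid_near_exists:
  assumes "0 < T" "0 < N" "t \<in> {0..T}"
  shows "\<exists>n\<le>N. \<bar>tgrid T N n - t\<bar> \<le> T / real N"
proof -
  define r where "r = (T - t) / (T / real N)"
  have "0 \<le> r" "r \<le> real N" using assms by (auto simp: r_def field_simps)
  moreover define n where "n = nat \<lfloor>r\<rfloor>"
  ultimately have n: "real n \<le> r" "r < real n + 1" "n \<le> N" by (auto simp: n_def) linarith
  then have "real n * (T / real N) \<le> T - t" "T - t < real n * (T / real N) + T / real N"
    using assms by (auto simp: r_def field_simps)
  then show ?thesis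
    using n(3) unfolding tgrid_def by (intro exI[of _ n]) (auto simp: abs_le_iff)
qed

lemma compact_eventually_near:
  fixes S :: "'a::metric_space set"
  assumes "compact S"
    and local: "\<And>z. z \<in> S \<Longrightarrow> \<exists>r>0. eventually (\<lambda>w. \<forall>z'. dist z' z < r \<longrightarrow> P w z') F"
  shows "\<exists>e>0. eventually (\<lambda>w. \<forall>z'. (\<exists>z\<in>S. dist z' z < e) \<longrightarrow> P w z') F"
proof -
  obtain R where R: "\<And>z. z \<in> S \<Longrightarrow> R z > 0 \<and> eventually (\<lambda>w. \<forall>z'. dist z' z < R z \<longrightarrow> P w z') F"
    using local by metis
  have "S \<subseteq> (\<Union>z\<in>S. ball z (R z / 2))" using R by force
  then obtain D where D: "D \<subseteq> S" "finite D" "S \<subseteq> (\<Union>z\<in>D. ball z (R z / 2))"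
    using compactE_image[OF \<open>compact S\<close>, of S "\<lambda>z. ball z (R z / 2)"] by blast
  define e where "e = Min (insert 1 ((\<lambda>z. R z / 2) ` D))"
  have "e > 0" using D R unfolding e_def by (subst Min_gr_iff) auto
  have e_le: "e \<le> R d / 2" if "d \<in> D" for d
    using D(2) that unfolding e_def by (intro Min_le) auto
  have "eventually (\<lambda>w. \<forall>d\<in>D. \<forall>z'. dist z' d < R d \<longrightarrow> P w z') F"
    using D R by (intro eventually_ball_finite) auto
  then have "eventually (\<lambda>w. \<forall>z'. (\<exists>z\<in>S. dist z' z < e) \<longrightarrow> P w z') F"
  proof (rule eventually_mono, intro allI impI)
    fix w z' assume P: "\<forall>d\<in>D. \<forall>z'. dist z' d < R d \<longrightarrow> P w z'" and "\<exists>z\<in>S. dist z' z < e"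
    then obtain z where "z \<in> S" "dist z' z < e" by blast
    moreover from this(1) obtain d where "d \<in> D" "dist d z < R d / 2"
      using D(3) by (auto simp: subset_iff)
    moreover have "dist z' d \<le> dist z' z + dist d z" by (metis dist_commute dist_triangle)
    ultimately have "dist z' d < R d" using e_le[of d] by linarith
    then show "P w z'" using P \<open>d \<in> D\<close> by blast
  qed
  with \<open>e > 0\<close> show ?thesis by blast
qed

lemma eventually_hr_filterD:
  assumes "eventually P (hr_filter T t x)"
  shows "\<exists>h0>0. \<exists>\<rho>>0. \<forall>h s y. 0 < h \<longrightarrow> h < h0 \<longrightarrow> s \<in> {0..T} \<longrightarrow>
           dist (s, y) (t, x) < \<rho> \<longrightarrow> P (h, s, y)"
proof -
  obtain Pf Pg where P: "eventually Pf (at_right (0::real))"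
    "eventually Pg (inf (nhds (t, x)) (principal ({0..T} \<times> UNIV)))" "\<forall>a b. Pf a \<longrightarrow> Pg b \<longrightarrow> P (a, b)"
    using assms unfolding hr_filter_def eventually_prod_filter by blast
  obtain h0 where "h0 > 0" "\<forall>h>0. h < h0 \<longrightarrow> Pf h"
    using P(1) unfolding eventually_at_right_field by auto
  moreover obtain \<rho> where "\<rho> > 0" "\<forall>p. dist p (t, x) < \<rho> \<longrightarrow> p \<in> {0..T} \<times> UNIV \<longrightarrow> Pg p"
    using P(2) unfolding eventually_inf_principal eventually_nhds_metric by auto
  ultimately show ?thesis using P(3) by (intro exI[of _ h0] conjI exI[of _ \<rho>]) auto
qed

lemma eventually_grid_filterI:
  assumes "eventually Q (at_right 0)" "\<rho> > 0"
  shows "eventually (\<lambda>(h, n, i). Q h \<and> 0 < h \<and> n \<le> N h \<and> i \<le> M h \<and>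
           dist (tgrid T (N h) n, xgrid (M h) (dx h) i) (t, x) < \<rho>) (grid_filter T N M dx t x)"
proof -
  have "eventually (\<lambda>p. dist p (t, x) < \<rho>) (nhds (t, x))"
    using assms(2) unfolding eventually_nhds_metric by blast
  then have "eventually (\<lambda>(h, p). Q h \<and> dist p (t, x) < \<rho>) (at_right 0 \<times>\<^sub>F nhds (t, x))"
    using eventually_prodI[OF assms(1)] by (simp add: case_prod_unfold)
  then show ?thesis
    unfolding grid_filter_def eventually_inf_principal eventually_filtercomap
    by (intro exI[of _ "\<lambda>(h, p). Q h \<and> dist p (t, x) < \<rho>"] conjI) auto
qed

locale grid_intervention =
  fixes T C :: real
    and Z :: "real \<Rightarrow> real \<Rightarrow> 'y::metric_space set"
    and \<Gamma> K :: "real \<Rightarrow> real \<Rightarrow> 'y \<Rightarrow> real"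
    and N M :: "real \<Rightarrow> nat" and dx :: "real \<Rightarrow> real"
    and Zh :: "real \<Rightarrow> real \<Rightarrow> real \<Rightarrow> 'y set"
  assumes T_pos: "T > 0"
    and Z_ne: "\<And>t x. t \<in> {0..T} \<Longrightarrow> Z t x \<noteq> {}"
    and Z_compact: "\<And>t x. t \<in> {0..T} \<Longrightarrow> compact (Z t x)"
    and \<Gamma>_cont: "continuous_on ({0..T} \<times> UNIV \<times> UNIV) (\<lambda>(t, x, z). \<Gamma> t x z)"
    and K_cont: "continuous_on ({0..T} \<times> UNIV \<times> UNIV) (\<lambda>(t, x, z). K t x z)"
    and N_pos: "\<And>h. h > 0 \<Longrightarrow> N h > 0"
    and dx_pos: "\<And>h. h > 0 \<Longrightarrow> dx h > 0"
    and dt_le: "\<And>h. h > 0 \<Longrightarrow> T / real (N h) \<le> C * h"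
    and dx_le: "\<And>h. h > 0 \<Longrightarrow> dx h \<le> C * h"
    and M_dx: "filterlim (\<lambda>h. real (M h) * dx h) at_top (at_right 0)"
    and Zh_fin: "\<And>h t x. h > 0 \<Longrightarrow> t \<in> {0..T} \<Longrightarrow> finite (Zh h t x)"
    and Zh_ne: "\<And>h t x. h > 0 \<Longrightarrow> t \<in> {0..T} \<Longrightarrow> Zh h t x \<noteq> {}"
    and Zh_sub: "\<And>h t x. h > 0 \<Longrightarrow> t \<in> {0..T} \<Longrightarrow> Zh h t x \<subseteq> Z t x"
    and Zh_conv: "\<And>S e. compact S \<Longrightarrow> S \<subseteq> {0..T} \<times> UNIV \<Longrightarrow> e > 0 \<Longrightarrow>
        eventually (\<lambda>h. \<forall>(s, y)\<in>S. hausdist (Zh h s y) (Z s y) < e) (at_right 0)"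
    and Zh_cont: "\<And>h s y e. h > 0 \<Longrightarrow> s \<in> {0..T} \<Longrightarrow> e > 0 \<Longrightarrow>
        \<exists>d>0. \<forall>s'\<in>{0..T}. \<forall>y'. dist (s', y') (s, y) < d \<longrightarrow>
                hausdist (Zh h s' y') (Zh h s y) < e"
begin

abbreviation tau :: "real \<Rightarrow> nat \<Rightarrow> real" where
  "tau h n \<equiv> tgrid T (N h) n"

abbreviation xi :: "real \<Rightarrow> nat \<Rightarrow> real" where
  "xi h i \<equiv> xgrid (M h) (dx h) i"

abbreviation disc_payoff :: "(real \<Rightarrow> real \<Rightarrow> real \<Rightarrow> real) \<Rightarrow> real \<Rightarrow> nat \<Rightarrow> nat \<Rightarrow> 'y \<Rightarrow> real" where
  "disc_payoff u h n i z \<equiv> interp (xgrid (M h) (dx h)) (M h) (\<lambda>j. u h (tau h n) (xi h j))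
     (\<Gamma> (tau h n) (xi h i) z) + K (tau h n) (xi h i) z"

definition scheme :: "(real \<Rightarrow> real \<Rightarrow> real \<Rightarrow> real) \<Rightarrow> real \<times> nat \<times> nat \<Rightarrow> ereal" where
  "scheme u = (\<lambda>(h, n, i). ereal (interv_disc (Zh h) \<Gamma> K T (N h) (M h) (dx h) n
     (\<lambda>j. u h (tgrid T (N h) n) (xgrid (M h) (dx h) j)) i))"

lemma scheme_eq_Sup: "scheme u (h, n, i) = ereal (Sup (disc_payoff u h n i ` Zh h (tau h n) (xi h i)))"
  by (simp add: scheme_def interv_disc_def Let_def)

lemma C_pos: "C > 0"
proof -
  have "0 < T / real (N 1)" using T_pos N_pos[of 1] by simp
  also have "\<dots> \<le> C" using dt_le[of 1] by simp
  finally show ?thesis .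
qed

lemma tau_in_range: "0 < h \<Longrightarrow> n \<le> N h \<Longrightarrow> tau h n \<in> {0..T}"
  using tgrid_in_range[OF T_pos N_pos] .

lemma eventually_grid_filter_admissible:
  "eventually (\<lambda>(h, n, i). 0 < h \<and> tau h n \<in> {0..T}) (grid_filter T N M dx t x)"
  using eventually_grid_filterI[OF eventually_True zero_less_one, where T = T and N = N and M = M
      and dx = dx and t = t and x = x]
  by (rule eventually_mono) (use tau_in_range in blast)

lemma grid_filter_neq_bot:
  assumes tx: "t \<in> {0..T}"
  shows "grid_filter T N M dx t x \<noteq> bot"
proof
  assume "grid_filter T N M dx t x = bot"
  then have "eventually (\<lambda>_. False) (grid_filter T N M dx t x)" by simp
  then obtain Q where Q: "eventually Q (at_right 0 \<times>\<^sub>F nhds (t, x))"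
    "\<And>h n i. Q (h, tau h n, xi h i) \<Longrightarrow> 0 < h \<Longrightarrow> n \<le> N h \<Longrightarrow> i \<le> M h \<Longrightarrow> False"
    unfolding grid_filter_def eventually_inf_principal eventually_filtercomap by fastforce
  obtain Pf Pg where P: "eventually Pf (at_right (0::real))" "eventually Pg (nhds (t, x))"
    "\<And>a b. Pf a \<Longrightarrow> Pg b \<Longrightarrow> Q (a, b)"
    using Q(1) unfolding eventually_prod_filter by blast
  obtain \<rho> where \<rho>: "\<rho> > 0" "\<And>p. dist p (t, x) < \<rho> \<Longrightarrow> Pg p"
    using P(2) unfolding eventually_nhds_metric by auto
  have "eventually (\<lambda>h. C * h < \<rho> / 2 \<and> 0 < h) (at_right (0::real))"
    unfolding eventually_at_right_field
    by (rule exI[of _ "\<rho> / (2 * C)"]) (use C_pos \<rho> in \<open>auto simp: field_simps\<close>)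
  moreover have "eventually (\<lambda>h. 2 * \<bar>x\<bar> + 1 \<le> real (M h) * dx h) (at_right (0::real))"
    using M_dx unfolding filterlim_at_top by blast
  ultimately obtain h where h: "Pf h" "C * h < \<rho> / 2" "0 < h" "2 * \<bar>x\<bar> + 1 \<le> real (M h) * dx h"
    using eventually_happens'[OF trivial_limit_at_right_real eventually_conj[OF P(1) eventually_conj]]
    by blast
  obtain n where n: "n \<le> N h" "\<bar>tau h n - t\<bar> \<le> T / real (N h)"
    using tgrid_near_exists[OF T_pos N_pos[OF h(3)] tx] by blast
  have "\<bar>x\<bar> < real (M h) * dx h / 2" using h(4) by linarith
  then obtain k where k: "k < M h" "xi h k \<le> x" "x < xi h (Suc k)"
    using xgrid_cell_exists[OF dx_pos[OF h(3)]] by blast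
  have "dist (tau h n) t \<le> C * h" "dist (xi h k) x \<le> C * h"
    using n(2) dt_le[OF h(3)] k xgrid_Suc[of "M h" "dx h" k] dx_le[OF h(3)]
    by (auto simp: dist_real_def)
  then have "dist (tau h n, xi h k) (t, x) < \<rho>"
    using dist_Pair_le_add[of "tau h n" "xi h k" t x] h(2) by linarith
  then show False using Q(2)[of h n k] P(3) \<rho>(2) h n(1) k(1) by auto
qed

text \<open>Z inherits Hausdorff continuity from the sets Zh h, which are Hausdorff continuous and
  converge to Z uniformly on compacts.\<close>
lemma Z_hausdorff_continuous:
  assumes tx: "t \<in> {0..T}" and e: "e > 0"
  shows "\<exists>d>0. \<forall>s\<in>{0..T}. \<forall>y. dist (s, y) (t, x) < d \<longrightarrow>
           (\<forall>z\<in>Z s y. \<exists>w\<in>Z t x. dist z w < e) \<and> (\<forall>w\<in>Z t x. \<exists>z\<in>Z s y. dist z w < e)"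
proof -
  define S where "S = {0..T} \<times> cball x 1"
  have "compact S" "S \<subseteq> {0..T} \<times> UNIV" unfolding S_def by (auto intro: compact_Times)
  then have "eventually (\<lambda>h. \<forall>(s, y)\<in>S. hausdist (Zh h s y) (Z s y) < e / 3) (at_right 0)"
    using e by (intro Zh_conv) auto
  then obtain h where h: "\<forall>(s, y)\<in>S. hausdist (Zh h s y) (Z s y) < e / 3" "h > 0"
    using eventually_happens'[OF trivial_limit_at_right_real eventually_conj[OF _ eventually_at_right_less]]
    by blast
  obtain d where d: "d > 0" "\<forall>s\<in>{0..T}. \<forall>y. dist (s, y) (t, x) < d \<longrightarrow>
      hausdist (Zh h s y) (Zh h t x) < e / 3"
    using Zh_cont[OF h(2) tx, where y = x and e = "e / 3"] e by auto
  have bounded_Z: "bounded (Z s y)" if "s \<in> {0..T}" for s y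
    using Z_compact[OF that] by (rule compact_imp_bounded)
  have bounded_Zh: "bounded (Zh h s y)" if "s \<in> {0..T}" for s y
    using Zh_fin[OF h(2) that] by (rule finite_imp_bounded)
  have "(\<forall>z\<in>Z s y. \<exists>w\<in>Z t x. dist z w < e) \<and> (\<forall>w\<in>Z t x. \<exists>z\<in>Z s y. dist z w < e)"
    if s: "s \<in> {0..T}" and sy: "dist (s, y) (t, x) < min d 1" for s y
  proof -
    have "dist y x \<le> 1" using sy dist_snd_le[of "(s, y)" "(t, x)"] by simp
    then have "(s, y) \<in> S" "(t, x) \<in> S" using s tx by (auto simp: S_def dist_commute)
    then have near_sy: "hausdist (Zh h s y) (Z s y) < e / 3"
      and near_tx: "hausdist (Zh h t x) (Z t x) < e / 3"
      and near_h: "hausdist (Zh h s y) (Zh h t x) < e / 3"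
      using h(1) d(2) s sy by auto
    have triangle: "dist a d' < e" if "dist a b < e / 3" "dist b c < e / 3" "dist c d' < e / 3"
      for a b c d' :: 'y
      using that dist_triangle[of a c b] dist_triangle[of a d' c] by linarith
    show ?thesis
    proof (intro conjI ballI)
      fix z assume "z \<in> Z s y"
      then obtain z1 where z1: "z1 \<in> Zh h s y" "dist z z1 < e / 3"
        using hausdist_lessD2[OF _ Zh_ne[OF h(2) s] bounded_Z[OF s] near_sy] by blast
      then obtain z2 where z2: "z2 \<in> Zh h t x" "dist z1 z2 < e / 3"
        using hausdist_lessD1[OF _ Zh_ne[OF h(2) tx] bounded_Zh[OF s] near_h] by blast
      then obtain w where "w \<in> Z t x" "dist z2 w < e / 3"
        using hausdist_lessD1[OF _ Z_ne[OF tx] bounded_Zh[OF tx] near_tx] by blast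
      then show "\<exists>w\<in>Z t x. dist z w < e" using z1 z2 triangle by blast
    next
      fix w assume "w \<in> Z t x"
      then obtain z2 where z2: "z2 \<in> Zh h t x" "dist w z2 < e / 3"
        using hausdist_lessD2[OF _ Zh_ne[OF h(2) tx] bounded_Z[OF tx] near_tx] by blast
      then obtain z1 where z1: "z1 \<in> Zh h s y" "dist z2 z1 < e / 3"
        using hausdist_lessD2[OF _ Zh_ne[OF h(2) s] bounded_Zh[OF tx] near_h] by blast
      then obtain z where "z \<in> Z s y" "dist z1 z < e / 3"
        using hausdist_lessD1[OF _ Z_ne[OF s] bounded_Zh[OF s] near_sy] by blast
      then show "\<exists>z\<in>Z s y. dist z w < e"
        using z1 z2 triangle[of z z1 z2 w] by (auto simp: dist_commute)
    qed
  qed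
  then show ?thesis using d(1) by (intro exI[of _ "min d 1"]) auto
qed

lemma controls_close:
  assumes tx: "t \<in> {0..T}" and e: "e > 0"
  shows "eventually (\<lambda>(h, n, i).
           (\<forall>z\<in>Zh h (tau h n) (xi h i). \<exists>w\<in>Z t x. dist z w < e) \<and>
           (\<forall>w\<in>Z t x. \<exists>z\<in>Zh h (tau h n) (xi h i). dist z w < e)) (grid_filter T N M dx t x)"
proof -
  obtain d where d: "d > 0" "\<forall>s\<in>{0..T}. \<forall>y. dist (s, y) (t, x) < d \<longrightarrow>
      (\<forall>z\<in>Z s y. \<exists>w\<in>Z t x. dist z w < e / 2) \<and> (\<forall>w\<in>Z t x. \<exists>z\<in>Z s y. dist z w < e / 2)"
    using Z_hausdorff_continuous[OF tx, of "e / 2" x] e by auto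
  define S where "S = {0..T} \<times> cball x 1"
  have "compact S" "S \<subseteq> {0..T} \<times> UNIV" unfolding S_def by (auto intro: compact_Times)
  then have "eventually (\<lambda>h. \<forall>(s, y)\<in>S. hausdist (Zh h s y) (Z s y) < e / 2) (at_right 0)"
    using e by (intro Zh_conv) auto
  moreover have "min d 1 > 0" using d(1) by simp
  ultimately have "eventually (\<lambda>(h, n, i). (\<forall>(s, y)\<in>S. hausdist (Zh h s y) (Z s y) < e / 2) \<and>
      0 < h \<and> n \<le> N h \<and> i \<le> M h \<and> dist (tau h n, xi h i) (t, x) < min d 1)
      (grid_filter T N M dx t x)"
    by (rule eventually_grid_filterI)
  then show ?thesis
  proof (rule eventually_mono, unfold split_paired_all case_prod_conv, elim conjE)
    fix h n i
    let ?s = "tau h n" and ?y = "xi h i"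
    assume h: "\<forall>(s, y)\<in>S. hausdist (Zh h s y) (Z s y) < e / 2" "0 < h" "n \<le> N h"
      and sy: "dist (?s, ?y) (t, x) < min d 1"
    have s: "?s \<in> {0..T}" using tau_in_range h(2,3) .
    have "dist ?y x \<le> 1" using sy dist_snd_le[of "(?s, ?y)" "(t, x)"] by simp
    then have near: "hausdist (Zh h ?s ?y) (Z ?s ?y) < e / 2"
      using h(1) s by (auto simp: S_def dist_commute)
    have Z_near: "\<forall>z\<in>Z ?s ?y. \<exists>w\<in>Z t x. dist z w < e / 2" "\<forall>w\<in>Z t x. \<exists>z\<in>Z ?s ?y. dist z w < e / 2"
      using d(2) s sy by auto
    show "(\<forall>z\<in>Zh h ?s ?y. \<exists>w\<in>Z t x. dist z w < e) \<and> (\<forall>w\<in>Z t x. \<exists>z\<in>Zh h ?s ?y. dist z w < e)"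
    proof (intro conjI ballI)
      fix z assume "z \<in> Zh h ?s ?y"
      then obtain w where "w \<in> Z t x" "dist z w < e / 2" using Zh_sub[OF h(2) s] Z_near(1) by blast
      then show "\<exists>w\<in>Z t x. dist z w < e" using e by (intro bexI[of _ w]) auto
    next
      fix w assume "w \<in> Z t x"
      then obtain z where z: "z \<in> Z ?s ?y" "dist z w < e / 2" using Z_near(2) by blast
      then obtain z' where z': "z' \<in> Zh h ?s ?y" "dist z z' < e / 2"
        using hausdist_lessD2[OF _ Zh_ne[OF h(2) s] compact_imp_bounded[OF Z_compact[OF s]] near] by blast
      have "dist z' w \<le> dist z z' + dist z w" by (metis dist_commute dist_triangle)
      then show "\<exists>z\<in>Zh h ?s ?y. dist z w < e"
        using z z' by (intro bexI[of _ z']) auto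
    qed
  qed
qed

lemma jump_data_continuous_at:
  assumes tx: "t \<in> {0..T}" and \<rho>: "\<rho> > 0" and \<epsilon>: "\<epsilon> > 0"
  shows "\<exists>r>0. \<forall>s\<in>{0..T}. \<forall>y z'. dist s t < r \<longrightarrow> dist y x < r \<longrightarrow> dist z' z < r \<longrightarrow>
           \<bar>\<Gamma> s y z' - \<Gamma> t x z\<bar> < \<rho> \<and> \<bar>K s y z' - K t x z\<bar> < \<epsilon>"
proof -
  have txz: "(t, x, z) \<in> {0..T} \<times> UNIV \<times> UNIV" using tx by simp
  obtain d1 where d1: "d1 > 0" "\<forall>p\<in>{0..T} \<times> UNIV \<times> UNIV. dist p (t, x, z) < d1 \<longrightarrow>
      dist ((\<lambda>(t, x, z). \<Gamma> t x z) p) (\<Gamma> t x z) < \<rho>"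
    using \<Gamma>_cont[unfolded continuous_on_iff] txz \<rho> by (metis (no_types, lifting) case_prod_conv)
  obtain d2 where d2: "d2 > 0" "\<forall>p\<in>{0..T} \<times> UNIV \<times> UNIV. dist p (t, x, z) < d2 \<longrightarrow>
      dist ((\<lambda>(t, x, z). K t x z) p) (K t x z) < \<epsilon>"
    using K_cont[unfolded continuous_on_iff] txz \<epsilon> by (metis (no_types, lifting) case_prod_conv)
  have "\<bar>\<Gamma> s y z' - \<Gamma> t x z\<bar> < \<rho> \<and> \<bar>K s y z' - K t x z\<bar> < \<epsilon>"
    if "s \<in> {0..T}" "dist s t < min d1 d2 / 3" "dist y x < min d1 d2 / 3" "dist z' z < min d1 d2 / 3"
    for s y z'
  proof -
    have "dist (s, y, z') (t, x, z) \<le> dist s t + (dist y x + dist z' z)"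
      using dist_Pair_le_add[of s "(y, z')" t "(x, z)"] dist_Pair_le_add[of y z' x z] by simp
    also have "\<dots> < min d1 d2" using that by simp
    finally show ?thesis using d1(2) d2(2) that(1) by (auto simp: dist_real_def)
  qed
  then show ?thesis using d1(1) d2(1) by (intro exI[of _ "min d1 d2 / 3"]) auto
qed

text \<open>Since M h * dx h \<rightarrow> \<infinity>, the perturbed jump target stays inside the grid, where the
  interpolant is a convex combination of two neighbouring nodes.\<close>
lemma jump_interp_bracket:
  assumes tx: "t \<in> {0..T}" and \<rho>: "\<rho> > 0" and \<epsilon>: "\<epsilon> > 0"
  shows "\<exists>r>0. eventually (\<lambda>(h, n, i). \<forall>z'. dist z' z < r \<longrightarrow>
           \<bar>K (tau h n) (xi h i) z' - K t x z\<bar> < \<epsilon> \<and>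
           (\<forall>U. \<exists>j\<le>M h. dist (tau h n, xi h j) (t, \<Gamma> t x z) < \<rho> \<and>
                interp (xgrid (M h) (dx h)) (M h) U (\<Gamma> (tau h n) (xi h i) z') \<le> U j) \<and>
           (\<forall>U. \<exists>j\<le>M h. dist (tau h n, xi h j) (t, \<Gamma> t x z) < \<rho> \<and>
                U j \<le> interp (xgrid (M h) (dx h)) (M h) U (\<Gamma> (tau h n) (xi h i) z')))
         (grid_filter T N M dx t x)"
proof -
  obtain r where "r > 0" and r: "\<forall>s\<in>{0..T}. \<forall>y z'. dist s t < r \<longrightarrow> dist y x < r \<longrightarrow> dist z' z < r \<longrightarrow>
      \<bar>\<Gamma> s y z' - \<Gamma> t x z\<bar> < \<rho> / 2 \<and> \<bar>K s y z' - K t x z\<bar> < \<epsilon>"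
    using jump_data_continuous_at[OF tx _ \<epsilon>, of "\<rho> / 2" x z] \<rho> by auto
  have "eventually (\<lambda>h. h < \<rho> / (4 * C)) (at_right (0::real))"
    unfolding eventually_at_right_field using \<rho> C_pos by (intro exI[of _ "\<rho> / (4 * C)"]) auto
  moreover have "eventually (\<lambda>h. 2 * (\<bar>\<Gamma> t x z\<bar> + \<rho>) \<le> real (M h) * dx h) (at_right (0::real))"
    using M_dx unfolding filterlim_at_top by blast
  ultimately have "eventually (\<lambda>h. h < \<rho> / (4 * C) \<and> 2 * (\<bar>\<Gamma> t x z\<bar> + \<rho>) \<le> real (M h) * dx h)
      (at_right 0)"
    by (rule eventually_conj)
  moreover have "min r (\<rho> / 4) > 0" using \<open>r > 0\<close> \<rho> by simp
  ultimately have "eventually (\<lambda>(h, n, i). (h < \<rho> / (4 * C) \<and> 2 * (\<bar>\<Gamma> t x z\<bar> + \<rho>) \<le> real (M h) * dx h)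
      \<and> 0 < h \<and> n \<le> N h \<and> i \<le> M h \<and> dist (tau h n, xi h i) (t, x) < min r (\<rho> / 4))
      (grid_filter T N M dx t x)"
    by (rule eventually_grid_filterI)
  moreover have "\<bar>K (tau h n) (xi h i) z' - K t x z\<bar> < \<epsilon> \<and>
      (\<forall>U. \<exists>j\<le>M h. dist (tau h n, xi h j) (t, \<Gamma> t x z) < \<rho> \<and>
           interp (xgrid (M h) (dx h)) (M h) U (\<Gamma> (tau h n) (xi h i) z') \<le> U j) \<and>
      (\<forall>U. \<exists>j\<le>M h. dist (tau h n, xi h j) (t, \<Gamma> t x z) < \<rho> \<and>
           U j \<le> interp (xgrid (M h) (dx h)) (M h) U (\<Gamma> (tau h n) (xi h i) z'))"
    if h: "h < \<rho> / (4 * C)" "2 * (\<bar>\<Gamma> t x z\<bar> + \<rho>) \<le> real (M h) * dx h" "0 < h" "n \<le> N h"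
      and sy: "dist (tau h n, xi h i) (t, x) < min r (\<rho> / 4)" and z': "dist z' z < r" for h n i z'
  proof -
    let ?s = "tau h n" and ?y = "xi h i"
    have ds: "dist ?s t < min r (\<rho> / 4)" and dy: "dist ?y x < r"
      using sy dist_fst_le[of "(?s, ?y)" "(t, x)"] dist_snd_le[of "(?s, ?y)" "(t, x)"] by auto
    then have \<Gamma>_near: "\<bar>\<Gamma> ?s ?y z' - \<Gamma> t x z\<bar> < \<rho> / 2" and K_near: "\<bar>K ?s ?y z' - K t x z\<bar> < \<epsilon>"
      using r tau_in_range[OF h(3,4)] z' by auto
    have "dx h \<le> C * h" using dx_le[OF h(3)] .
    also have "\<dots> < \<rho> / 4" using h(1) C_pos by (simp add: field_simps)
    finally have dx_small: "dx h < \<rho> / 4" .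
    have inside: "\<bar>\<Gamma> ?s ?y z'\<bar> < real (M h) * dx h / 2"
      using \<Gamma>_near h(2) \<rho> abs_triangle_ineq[of "\<Gamma> ?s ?y z' - \<Gamma> t x z" "\<Gamma> t x z"] by simp
    have close: "dist (?s, xi h j) (t, \<Gamma> t x z) < \<rho>" if "\<bar>xi h j - \<Gamma> ?s ?y z'\<bar> \<le> dx h" for j
    proof -
      have "dist (?s, xi h j) (t, \<Gamma> t x z) \<le> dist ?s t + dist (xi h j) (\<Gamma> t x z)"
        by (rule dist_Pair_le_add)
      also have "\<dots> < \<rho>"
        using ds that \<Gamma>_near dx_small
          abs_triangle_ineq[of "xi h j - \<Gamma> ?s ?y z'" "\<Gamma> ?s ?y z' - \<Gamma> t x z"]
        by (simp add: dist_real_def)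
      finally show ?thesis .
    qed
    show ?thesis
      using K_near interp_xgrid_bracket[OF dx_pos[OF h(3)] inside] close by blast
  qed
  ultimately show ?thesis
    using \<open>r > 0\<close> by (intro exI[of _ r] conjI) (auto elim!: eventually_mono)
qed

lemma eventually_hr_filter_on_grid:
  assumes "eventually P (hr_filter T t y)"
  shows "\<exists>\<rho>>0. eventually (\<lambda>(h, n, i). \<forall>j. dist (tau h n, xi h j) (t, y) < \<rho> \<longrightarrow> P (h, tau h n, xi h j))
           (grid_filter T N M dx t x)"
proof -
  obtain h0 \<rho> where h0: "h0 > 0" "\<rho> > 0"
    "\<forall>h s y'. 0 < h \<longrightarrow> h < h0 \<longrightarrow> s \<in> {0..T} \<longrightarrow> dist (s, y') (t, y) < \<rho> \<longrightarrow> P (h, s, y')"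
    using eventually_hr_filterD[OF assms] by blast
  have "eventually (\<lambda>h. h < h0) (at_right (0::real))"
    unfolding eventually_at_right_field using h0(1) by blast
  from eventually_grid_filterI[OF this zero_less_one]
  have "eventually (\<lambda>(h, n, i). \<forall>j. dist (tau h n, xi h j) (t, y) < \<rho> \<longrightarrow> P (h, tau h n, xi h j))
      (grid_filter T N M dx t x)"
    by (rule eventually_mono) (use h0(3) tau_in_range in auto)
  with h0(2) show ?thesis by blast
qed

lemma payoff_eventually_le:
  assumes tx: "t \<in> {0..T}" and less: "upper_hr T u t (\<Gamma> t x z) + ereal (K t x z) < ereal c"
  shows "\<exists>r>0. eventually (\<lambda>(h, n, i). \<forall>z'. dist z' z < r \<longrightarrow> disc_payoff u h n i z' \<le> c)
           (grid_filter T N M dx t x)"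
proof -
  from less have "upper_hr T u t (\<Gamma> t x z) < ereal (c - K t x z)"
    by (cases "upper_hr T u t (\<Gamma> t x z)") auto
  then obtain a where a: "upper_hr T u t (\<Gamma> t x z) < ereal a" "ereal a < ereal (c - K t x z)"
    using ereal_dense2 by blast
  have "eventually (\<lambda>w. (\<lambda>(h, s, y). ereal (u h s y)) w < ereal a) (hr_filter T t (\<Gamma> t x z))"
    using Limsup_lessD[OF a(1)[unfolded upper_hr_def]] .
  then have u_below: "eventually (\<lambda>(h, s, y). u h s y < a) (hr_filter T t (\<Gamma> t x z))"
    by (simp add: case_prod_unfold)
  then obtain \<rho> where \<rho>: "\<rho> > 0" "eventually (\<lambda>(h, n, i). \<forall>j. dist (tau h n, xi h j) (t, \<Gamma> t x z) < \<rho> \<longrightarrow>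
      u h (tau h n) (xi h j) < a) (grid_filter T N M dx t x)"
    using eventually_hr_filter_on_grid[OF u_below, of x] by auto
  obtain r where r: "r > 0" "eventually (\<lambda>(h, n, i). \<forall>z'. dist z' z < r \<longrightarrow>
           \<bar>K (tau h n) (xi h i) z' - K t x z\<bar> < c - a - K t x z \<and>
           (\<forall>U. \<exists>j\<le>M h. dist (tau h n, xi h j) (t, \<Gamma> t x z) < \<rho> \<and>
                interp (xgrid (M h) (dx h)) (M h) U (\<Gamma> (tau h n) (xi h i) z') \<le> U j) \<and>
           (\<forall>U. \<exists>j\<le>M h. dist (tau h n, xi h j) (t, \<Gamma> t x z) < \<rho> \<and>
                U j \<le> interp (xgrid (M h) (dx h)) (M h) U (\<Gamma> (tau h n) (xi h i) z')))
         (grid_filter T N M dx t x)"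
    using jump_interp_bracket[OF tx \<rho>(1), of "c - a - K t x z" z x] a(2) by auto
  from eventually_conj[OF \<rho>(2) r(2)]
  have "eventually (\<lambda>(h, n, i). \<forall>z'. dist z' z < r \<longrightarrow> disc_payoff u h n i z' \<le> c)
      (grid_filter T N M dx t x)"
  proof (rule eventually_mono, unfold split_paired_all case_prod_conv, elim conjE, intro allI impI)
    fix h n i z'
    assume grid: "\<forall>j. dist (tau h n, xi h j) (t, \<Gamma> t x z) < \<rho> \<longrightarrow> u h (tau h n) (xi h j) < a"
      and bracket: "\<forall>z'. dist z' z < r \<longrightarrow>
           \<bar>K (tau h n) (xi h i) z' - K t x z\<bar> < c - a - K t x z \<and>
           (\<forall>U. \<exists>j\<le>M h. dist (tau h n, xi h j) (t, \<Gamma> t x z) < \<rho> \<and>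
                interp (xgrid (M h) (dx h)) (M h) U (\<Gamma> (tau h n) (xi h i) z') \<le> U j) \<and>
           (\<forall>U. \<exists>j\<le>M h. dist (tau h n, xi h j) (t, \<Gamma> t x z) < \<rho> \<and>
                U j \<le> interp (xgrid (M h) (dx h)) (M h) U (\<Gamma> (tau h n) (xi h i) z'))"
      and "dist z' z < r"
    then have K_near: "\<bar>K (tau h n) (xi h i) z' - K t x z\<bar> < c - a - K t x z"
      and bracket_U: "\<forall>U. \<exists>j\<le>M h. dist (tau h n, xi h j) (t, \<Gamma> t x z) < \<rho> \<and>
                interp (xgrid (M h) (dx h)) (M h) U (\<Gamma> (tau h n) (xi h i) z') \<le> U j"
      by simp_all
    obtain j where j: "dist (tau h n, xi h j) (t, \<Gamma> t x z) < \<rho>"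
      and le: "interp (xgrid (M h) (dx h)) (M h) (\<lambda>j. u h (tau h n) (xi h j)) (\<Gamma> (tau h n) (xi h i) z')
         \<le> u h (tau h n) (xi h j)"
      using bracket_U[rule_format, of "\<lambda>j. u h (tau h n) (xi h j)"] by blast
    have "u h (tau h n) (xi h j) < a" using grid j by blast
    then show "disc_payoff u h n i z' \<le> c" using K_near le by (simp add: abs_less_iff)
  qed
  with r(1) show ?thesis by blast
qed

lemma payoff_eventually_ge:
  assumes tx: "t \<in> {0..T}" and less: "ereal c < lower_hr T u t (\<Gamma> t x z) + ereal (K t x z)"
  shows "\<exists>r>0. eventually (\<lambda>(h, n, i). \<forall>z'. dist z' z < r \<longrightarrow> c \<le> disc_payoff u h n i z')
           (grid_filter T N M dx t x)"
proof -
  from less have "ereal (c - K t x z) < lower_hr T u t (\<Gamma> t x z)"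
    by (cases "lower_hr T u t (\<Gamma> t x z)") auto
  then obtain a where a: "ereal (c - K t x z) < ereal a" "ereal a < lower_hr T u t (\<Gamma> t x z)"
    using ereal_dense2 by blast
  have "eventually (\<lambda>w. ereal a < (\<lambda>(h, s, y). ereal (u h s y)) w) (hr_filter T t (\<Gamma> t x z))"
    using less_LiminfD[OF a(2)[unfolded lower_hr_def]] .
  then have u_above: "eventually (\<lambda>(h, s, y). a < u h s y) (hr_filter T t (\<Gamma> t x z))"
    by (simp add: case_prod_unfold)
  then obtain \<rho> where \<rho>: "\<rho> > 0" "eventually (\<lambda>(h, n, i). \<forall>j. dist (tau h n, xi h j) (t, \<Gamma> t x z) < \<rho> \<longrightarrow>
      a < u h (tau h n) (xi h j)) (grid_filter T N M dx t x)"
    using eventually_hr_filter_on_grid[OF u_above, of x] by auto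
  obtain r where r: "r > 0" "eventually (\<lambda>(h, n, i). \<forall>z'. dist z' z < r \<longrightarrow>
           \<bar>K (tau h n) (xi h i) z' - K t x z\<bar> < a + K t x z - c \<and>
           (\<forall>U. \<exists>j\<le>M h. dist (tau h n, xi h j) (t, \<Gamma> t x z) < \<rho> \<and>
                interp (xgrid (M h) (dx h)) (M h) U (\<Gamma> (tau h n) (xi h i) z') \<le> U j) \<and>
           (\<forall>U. \<exists>j\<le>M h. dist (tau h n, xi h j) (t, \<Gamma> t x z) < \<rho> \<and>
                U j \<le> interp (xgrid (M h) (dx h)) (M h) U (\<Gamma> (tau h n) (xi h i) z')))
         (grid_filter T N M dx t x)"
    using jump_interp_bracket[OF tx \<rho>(1), of "a + K t x z - c" z x] a(1) by auto
  from eventually_conj[OF \<rho>(2) r(2)]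
  have "eventually (\<lambda>(h, n, i). \<forall>z'. dist z' z < r \<longrightarrow> c \<le> disc_payoff u h n i z')
      (grid_filter T N M dx t x)"
  proof (rule eventually_mono, unfold split_paired_all case_prod_conv, elim conjE, intro allI impI)
    fix h n i z'
    assume grid: "\<forall>j. dist (tau h n, xi h j) (t, \<Gamma> t x z) < \<rho> \<longrightarrow> a < u h (tau h n) (xi h j)"
      and bracket: "\<forall>z'. dist z' z < r \<longrightarrow>
           \<bar>K (tau h n) (xi h i) z' - K t x z\<bar> < a + K t x z - c \<and>
           (\<forall>U. \<exists>j\<le>M h. dist (tau h n, xi h j) (t, \<Gamma> t x z) < \<rho> \<and>
                interp (xgrid (M h) (dx h)) (M h) U (\<Gamma> (tau h n) (xi h i) z') \<le> U j) \<and>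
           (\<forall>U. \<exists>j\<le>M h. dist (tau h n, xi h j) (t, \<Gamma> t x z) < \<rho> \<and>
                U j \<le> interp (xgrid (M h) (dx h)) (M h) U (\<Gamma> (tau h n) (xi h i) z'))"
      and "dist z' z < r"
    then have K_near: "\<bar>K (tau h n) (xi h i) z' - K t x z\<bar> < a + K t x z - c"
      and bracket_U: "\<forall>U. \<exists>j\<le>M h. dist (tau h n, xi h j) (t, \<Gamma> t x z) < \<rho> \<and>
                U j \<le> interp (xgrid (M h) (dx h)) (M h) U (\<Gamma> (tau h n) (xi h i) z')"
      by simp_all
    obtain j where j: "dist (tau h n, xi h j) (t, \<Gamma> t x z) < \<rho>"
      and ge: "u h (tau h n) (xi h j)
         \<le> interp (xgrid (M h) (dx h)) (M h) (\<lambda>j. u h (tau h n) (xi h j)) (\<Gamma> (tau h n) (xi h i) z')"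
      using bracket_U[rule_format, of "\<lambda>j. u h (tau h n) (xi h j)"] by blast
    have "a < u h (tau h n) (xi h j)" using grid j by blast
    then show "c \<le> disc_payoff u h n i z'" using K_near ge by (simp add: abs_less_iff)
  qed
  with r(1) show ?thesis by blast
qed

lemma Limsup_scheme_le_interv_upper:
  assumes tx: "t \<in> {0..T}"
  shows "Limsup (grid_filter T N M dx t x) (scheme u) \<le> interv Z \<Gamma> K (upper_hr T u) t x"
proof (rule dense_ge)
  fix c assume c: "interv Z \<Gamma> K (upper_hr T u) t x < c"
  show "Limsup (grid_filter T N M dx t x) (scheme u) \<le> c"
  proof (cases c)
    case (real c')
    have "\<exists>r>0. eventually (\<lambda>(h, n, i). \<forall>z'. dist z' z < r \<longrightarrow> disc_payoff u h n i z' \<le> c')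
        (grid_filter T N M dx t x)" if "z \<in> Z t x" for z
    proof (rule payoff_eventually_le[OF tx])
      have "upper_hr T u t (\<Gamma> t x z) + ereal (K t x z) \<le> interv Z \<Gamma> K (upper_hr T u) t x"
        unfolding interv_def using that by (rule SUP_upper)
      then show "upper_hr T u t (\<Gamma> t x z) + ereal (K t x z) < ereal c'" using c real by simp
    qed
    then have "\<exists>r>0. eventually (\<lambda>w. \<forall>z'. dist z' z < r \<longrightarrow>
        (case w of (h, n, i) \<Rightarrow> disc_payoff u h n i z' \<le> c')) (grid_filter T N M dx t x)"
      if "z \<in> Z t x" for z
      using that by (simp add: case_prod_unfold)
    from compact_eventually_near[OF Z_compact[OF tx] this] obtain e where e: "e > 0"
      "eventually (\<lambda>w. \<forall>z'. (\<exists>z\<in>Z t x. dist z' z < e) \<longrightarrow>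
         (case w of (h, n, i) \<Rightarrow> disc_payoff u h n i z' \<le> c')) (grid_filter T N M dx t x)"
      by blast
    from eventually_conj[OF eventually_conj[OF controls_close[OF tx e(1), of x] e(2)]
        eventually_grid_filter_admissible]
    have "eventually (\<lambda>w. scheme u w \<le> c) (grid_filter T N M dx t x)"
    proof (rule eventually_mono, unfold split_paired_all case_prod_conv, elim conjE)
      fix h n i
      assume "\<forall>z\<in>Zh h (tau h n) (xi h i). \<exists>w\<in>Z t x. dist z w < e"
        and "\<forall>z'. (\<exists>z\<in>Z t x. dist z' z < e) \<longrightarrow> disc_payoff u h n i z' \<le> c'"
        and "0 < h" "tau h n \<in> {0..T}"
      then show "scheme u (h, n, i) \<le> c"
        using Zh_ne unfolding scheme_eq_Sup real by (auto intro!: cSUP_least)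
    qed
    then show ?thesis by (rule Limsup_bounded)
  qed (use c in auto)
qed

lemma interv_lower_le_Liminf_scheme:
  assumes tx: "t \<in> {0..T}"
  shows "interv Z \<Gamma> K (lower_hr T u) t x \<le> Liminf (grid_filter T N M dx t x) (scheme u)"
proof (rule dense_le)
  fix c assume c: "c < interv Z \<Gamma> K (lower_hr T u) t x"
  show "c \<le> Liminf (grid_filter T N M dx t x) (scheme u)"
  proof (cases c)
    case (real c')
    obtain z where z: "z \<in> Z t x" "ereal c' < lower_hr T u t (\<Gamma> t x z) + ereal (K t x z)"
      using c real unfolding interv_def by (auto simp: less_SUP_iff)
    obtain r where r: "r > 0" "eventually (\<lambda>(h, n, i). \<forall>z'. dist z' z < r \<longrightarrow> c' \<le> disc_payoff u h n i z')
        (grid_filter T N M dx t x)"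
      using payoff_eventually_ge[OF tx z(2)] by blast
    from eventually_conj[OF eventually_conj[OF controls_close[OF tx r(1), of x] r(2)]
        eventually_grid_filter_admissible]
    have "eventually (\<lambda>w. c \<le> scheme u w) (grid_filter T N M dx t x)"
    proof (rule eventually_mono, unfold split_paired_all case_prod_conv, elim conjE)
      fix h n i
      assume "\<forall>w\<in>Z t x. \<exists>z'\<in>Zh h (tau h n) (xi h i). dist z' w < r"
        and "\<forall>z'. dist z' z < r \<longrightarrow> c' \<le> disc_payoff u h n i z'"
        and h: "0 < h" "tau h n \<in> {0..T}"
      then obtain z' where "z' \<in> Zh h (tau h n) (xi h i)" "c' \<le> disc_payoff u h n i z'"
        using z(1) by blast
      moreover have "finite (Zh h (tau h n) (xi h i))" using Zh_fin h by blast
      ultimately show "c \<le> scheme u (h, n, i)"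
        unfolding scheme_eq_Sup real by (auto intro: cSUP_upper2)
    qed
    then show ?thesis by (rule Liminf_bounded)
  qed (use c in auto)
qed

end

theorem lemma4p9:
  fixes T C :: real
    and Z :: "real \<Rightarrow> real \<Rightarrow> 'y::metric_space set"
    and \<Gamma> K :: "real \<Rightarrow> real \<Rightarrow> 'y \<Rightarrow> real"
    and N M :: "real \<Rightarrow> nat" and dx :: "real \<Rightarrow> real"
    and Zh :: "real \<Rightarrow> real \<Rightarrow> real \<Rightarrow> 'y set"
    and u :: "real \<Rightarrow> real \<Rightarrow> real \<Rightarrow> real"
    and t x :: real
  assumes T_pos: "T > 0"
    and Z_ne: "\<And>t x. t \<in> {0..T} \<Longrightarrow> Z t x \<noteq> {}"
    and Z_compact: "\<And>t x. t \<in> {0..T} \<Longrightarrow> compact (Z t x)"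
    and \<Gamma>_cont: "continuous_on ({0..T} \<times> UNIV \<times> UNIV) (\<lambda>(t, x, z). \<Gamma> t x z)"
    and K_cont: "continuous_on ({0..T} \<times> UNIV \<times> UNIV) (\<lambda>(t, x, z). K t x z)"
    and N_pos: "\<And>h. h > 0 \<Longrightarrow> N h > 0"
    and dx_pos: "\<And>h. h > 0 \<Longrightarrow> dx h > 0"
    and dt_le: "\<And>h. h > 0 \<Longrightarrow> T / real (N h) \<le> C * h"
    and dx_le: "\<And>h. h > 0 \<Longrightarrow> dx h \<le> C * h"
    and M_even: "\<And>h. h > 0 \<Longrightarrow> even (M h)"
    and M_dx: "filterlim (\<lambda>h. real (M h) * dx h) at_top (at_right 0)"
    and Zh_fin: "\<And>h t x. h > 0 \<Longrightarrow> t \<in> {0..T} \<Longrightarrow> finite (Zh h t x)"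
    and Zh_ne: "\<And>h t x. h > 0 \<Longrightarrow> t \<in> {0..T} \<Longrightarrow> Zh h t x \<noteq> {}"
    and Zh_sub: "\<And>h t x. h > 0 \<Longrightarrow> t \<in> {0..T} \<Longrightarrow> Zh h t x \<subseteq> Z t x"
    and Zh_conv: "\<And>S e. compact S \<Longrightarrow> S \<subseteq> {0..T} \<times> UNIV \<Longrightarrow> e > 0 \<Longrightarrow>
        eventually (\<lambda>h. \<forall>(s, y)\<in>S. hausdist (Zh h s y) (Z s y) < e) (at_right 0)"
    and Zh_cont: "\<And>h s y e. h > 0 \<Longrightarrow> s \<in> {0..T} \<Longrightarrow> e > 0 \<Longrightarrow>
        \<exists>d>0. \<forall>s'\<in>{0..T}. \<forall>y'. dist (s', y') (s, y) < d \<longrightarrow>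
                hausdist (Zh h s' y') (Zh h s y) < e"
    and u_bdd: "\<exists>B. \<forall>h>0. \<forall>s\<in>{0..T}. \<forall>y. \<bar>u h s y\<bar> \<le> B"
    and tx: "t \<in> {0..T}"
  shows "interv Z \<Gamma> K (lower_hr T u) t x
           \<le> Liminf (grid_filter T N M dx t x)
               (\<lambda>(h, n, i). ereal (interv_disc (Zh h) \<Gamma> K T (N h) (M h) (dx h) n
                  (\<lambda>j. u h (tgrid T (N h) n) (xgrid (M h) (dx h) j)) i))
       \<and> Liminf (grid_filter T N M dx t x)
               (\<lambda>(h, n, i). ereal (interv_disc (Zh h) \<Gamma> K T (N h) (M h) (dx h) n
                  (\<lambda>j. u h (tgrid T (N h) n) (xgrid (M h) (dx h) j)) i))
         \<le> Limsup (grid_filter T N M dx t x)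
               (\<lambda>(h, n, i). ereal (interv_disc (Zh h) \<Gamma> K T (N h) (M h) (dx h) n
                  (\<lambda>j. u h (tgrid T (N h) n) (xgrid (M h) (dx h) j)) i))
       \<and> Limsup (grid_filter T N M dx t x)
               (\<lambda>(h, n, i). ereal (interv_disc (Zh h) \<Gamma> K T (N h) (M h) (dx h) n
                  (\<lambda>j. u h (tgrid T (N h) n) (xgrid (M h) (dx h) j)) i))
         \<le> interv Z \<Gamma> K (upper_hr T u) t x"
proof -
  interpret grid_intervention T C Z \<Gamma> K N M dx Zh
    by unfold_locales (fact T_pos Z_ne Z_compact \<Gamma>_cont K_cont N_pos dx_pos dt_le dx_le M_dx
        Zh_fin Zh_ne Zh_sub Zh_conv Zh_cont)+
  have "Liminf (grid_filter T N M dx t x) (scheme u) \<le> Limsup (grid_filter T N M dx t x) (scheme u)"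
    using grid_filter_neq_bot[OF tx] by (rule Liminf_le_Limsup)
  with interv_lower_le_Liminf_scheme[OF tx] Limsup_scheme_le_interv_upper[OF tx]
  show ?thesis unfolding scheme_def by blast
qed

end
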